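(* Let $k\ge 2$ and $m\ge1$ be integers. Let $U_k$ be the $(2^k-1-k)\times(2^k-1)$ binary matrix whose columns are indexed by $1,\dots,2^k-1$ and whose rows are indexed by the integers $r\in\{1,\dots,2^k-1\}$ that are not powers of $2$, where the row indexed by $r$, with $2^t<r<2^{t+1}$, has $1$-entries exactly in columns $r$, $r-2^t$, $2^t$. Let $T_k$ be the square $(2^k-1-k)\times(2^k-1-k)$ submatrix of $U_k$ formed by the columns whose index is not a power of $2$, and $R_k$ the $(2^k-1-k)\times k$ submatrix formed by the columns indexed by $2^{k-1},\dots,2,1$ (in this order). Define the $((2^k-1)m-k)\times((2^k-1)m)$ binary block matrix \[ U_{k,m}=\left(\begin{array}{ccc|c|c} T_k&&&&R_k\\ &\ddots&&&\vdots\\ &&T_k&&R_k\\\hline &&&I_{(m-1)k}&\begin{array}{c}I_k\\ \vdots\\ I_k\end{array} \end{array}\right), \] where there are $m$ diagonal copies of $T_k$, the last block column consists of $m$ copies of $R_k$ stacked above $m-1$ copies of $I_k$, and all unspecified blocks are zero. Then $u(U_{k,m})\ge 2^{k-1}m$.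
   Context: All matrices are binary; $I_j$ is the $j\times j$ identity. For a nonempty set $S$ of columns of a binary matrix, let $z$ be the sum over the integers of the columns in $S$; $S$ is $1$-free if no entry of $z$ equals $1$. For a binary $m'\times n'$ matrix $A$ with $m'<n'$, $u(A)$ is the smallest cardinality of a nonempty $1$-free set of columns of $A$. *)

theory Defs
  imports Main
begin

text \<open>Binary matrices are represented as functions nat => nat => bool
  (row index, column index, 0-based), together with explicit dimensions.\<close>

definition one_free :: "(nat \<Rightarrow> nat \<Rightarrow> bool) \<Rightarrow> nat \<Rightarrow> nat set \<Rightarrow> bool" where
  "one_free A mr S \<longleftrightarrow> (\<forall>i<mr. (\<Sum>j\<in>S. (of_bool (A i j) :: int)) \<noteq> 1)"

definition u_min :: "(nat \<Rightarrow> nat \<Rightarrow> bool) \<Rightarrow> nat \<Rightarrow> nat \<Rightarrow> nat" where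
  "u_min A mr nc = (LEAST c. \<exists>S. S \<subseteq> {..<nc} \<and> S \<noteq> {} \<and> one_free A mr S \<and> card S = c)"

definition is_pow2 :: "nat \<Rightarrow> bool" where
  "is_pow2 r \<longleftrightarrow> (\<exists>t. r = 2 ^ t)"

definition U_entry :: "nat \<Rightarrow> nat \<Rightarrow> bool" where
  "U_entry r c \<longleftrightarrow> (\<exists>t. 2 ^ t < r \<and> r < 2 ^ (t + 1) \<and> (c = r \<or> c = r - 2 ^ t \<or> c = 2 ^ t))"

definition nonpow :: "nat \<Rightarrow> nat list" where
  "nonpow k = filter (\<lambda>r. \<not> is_pow2 r) [1..<2 ^ k]"

definition T_mat :: "nat \<Rightarrow> nat \<Rightarrow> nat \<Rightarrow> bool" where
  "T_mat k i j = U_entry (nonpow k ! i) (nonpow k ! j)"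

definition R_mat :: "nat \<Rightarrow> nat \<Rightarrow> nat \<Rightarrow> bool" where
  "R_mat k i j = U_entry (nonpow k ! i) (2 ^ (k - 1 - j))"

text \<open>The block matrix U_{k,m}; p = 2^k-1-k. Column blocks: m copies of T_k (width m*p),
  identity part (width (m-1)*k), last block column (width k).\<close>
definition Ukm :: "nat \<Rightarrow> nat \<Rightarrow> nat \<Rightarrow> nat \<Rightarrow> bool" where
  "Ukm k m i j = (let p = 2 ^ k - 1 - k in
     if i < m * p then
       (if j < m * p then j div p = i div p \<and> T_mat k (i mod p) (j mod p)
        else if j < m * p + (m - 1) * k then False
        else R_mat k (i mod p) (j - m * p - (m - 1) * k))
     else
       (if j < m * p then False
        else if j < m * p + (m - 1) * k then j - m * p = i - m * p
        else j - m * p - (m - 1) * k = (i - m * p) mod k))"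

end

theory Submission
  imports Defs "HOL-Library.Discrete_Functions"
begin

text \<open>
  A nonempty 1-free set S of column labels of U_k has at least 2^(k-1) elements and contains a
  power of 2. Indeed, row 2^(k-1) + a of U_k meets only the labels a, 2^(k-1) + a and 2^(k-1).
  If 2^(k-1) is in S, these rows put a or 2^(k-1) + a into S for every 0 < a < 2^(k-1);
  otherwise they make S the union of its lower half and a translate of it, and the lower half is
  1-free for U_(k-1).

  In U_(k,m) an identity row meets one identity column and one column of the last block
  column, so a 1-free set S contains both or neither. Thus the R_k-columns selected by S are
  selected in every diagonal block: the columns of S in block b together with the selected
  R_k-columns form a 1-free label set of U_k. One of these m label sets is nonempty, so it
  contains a power of 2, i.e. some R_k-column is selected; hence all of them are nonempty and
  S has at least m 2^(k-1) elements, as distinct pairs (block, label) come from distinct columns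
  of S, the identity columns standing in for the R_k-columns of all blocks but the first.
\<close>

lemma floor_log_eq_if_bracket:
  assumes "2 ^ t < r" "r < 2 ^ Suc t"
  shows "floor_log r = t"
  using assms by (intro floor_log_eqI) auto

lemma U_entry_iff:
  assumes "2 ^ t < r" "r < 2 ^ Suc t"
  shows "U_entry r c \<longleftrightarrow> c = r \<or> c = r - 2 ^ t \<or> c = 2 ^ t"
proof -
  have "s = t" if "2 ^ s < r" "r < 2 ^ Suc s" for s
    using floor_log_eq_if_bracket[OF that] floor_log_eq_if_bracket[OF assms] by simp
  then show ?thesis
    unfolding U_entry_def using assms by (metis Suc_eq_plus1)
qed

lemma not_is_pow2_if_bracket:
  fixes r :: nat
  assumes "2 ^ t < r" "r < 2 ^ Suc t"
  shows "\<not> is_pow2 r"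
proof
  assume "is_pow2 r"
  then obtain s where "r = 2 ^ s" unfolding is_pow2_def by blast
  have "t < s"
    using power_less_imp_less_exp[of 2 t s] assms(1) \<open>r = 2 ^ s\<close> by simp
  moreover have "s < Suc t"
    using power_less_imp_less_exp[of 2 s "Suc t"] assms(2) \<open>r = 2 ^ s\<close> by simp
  ultimately show False by simp
qed

lemma bracket_if_not_is_pow2:
  fixes r :: nat
  assumes "0 < r" "\<not> is_pow2 r"
  obtains t where "2 ^ t < r" "r < 2 ^ Suc t"
proof
  have "2 ^ floor_log r \<noteq> r"
    using assms(2) unfolding is_pow2_def by metis
  with floor_log_exp2_le[OF assms(1)] show "2 ^ floor_log r < r" by simp
  show "r < 2 ^ Suc (floor_log r)"
    using floor_log_exp2_gt[of r] by simp
qed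

lemma U_entry_le: "U_entry r c \<Longrightarrow> c \<le> r"
  unfolding U_entry_def by auto

lemma card_U_row:
  assumes "0 < r" "r < 2 ^ k" "\<not> is_pow2 r"
  shows "card {c \<in> {1..<2 ^ k}. U_entry r c} = 3"
proof -
  obtain t where t: "2 ^ t < r" "r < 2 ^ Suc t"
    using bracket_if_not_is_pow2 assms(1,3) by blast
  have "(2::nat) ^ t < 2 ^ k"
    using t(1) assms(2) by linarith
  then have "{c \<in> {1..<2 ^ k}. U_entry r c} = {r, r - 2 ^ t, 2 ^ t}"
    using U_entry_iff[OF t] t assms(2) by auto
  moreover have "r - 2 ^ t < 2 ^ t"
    using t by simp
  ultimately show ?thesis
    using t by simp
qed

definition U_one_free :: "nat \<Rightarrow> nat set \<Rightarrow> bool" where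
  "U_one_free k S \<longleftrightarrow>
     (\<forall>r. 0 < r \<longrightarrow> r < 2 ^ k \<longrightarrow> \<not> is_pow2 r \<longrightarrow> card {c \<in> S. U_entry r c} \<noteq> 1)"

lemma U_one_free_top_row:
  assumes "U_one_free (Suc k) S" "0 < a" "a < 2 ^ k"
  shows "card ({2 ^ k + a, a, 2 ^ k} \<inter> S) \<noteq> 1"
proof -
  have bracket: "2 ^ k < 2 ^ k + a" "2 ^ k + a < 2 ^ Suc k"
    using assms(2,3) by simp_all
  have "U_entry (2 ^ k + a) c \<longleftrightarrow> c \<in> {2 ^ k + a, a, 2 ^ k}" for c
    using U_entry_iff[OF bracket, of c] by simp
  then have "{c \<in> S. U_entry (2 ^ k + a) c} = {2 ^ k + a, a, 2 ^ k} \<inter> S"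
    by blast
  moreover have "card {c \<in> S. U_entry (2 ^ k + a) c} \<noteq> 1"
    using assms(1)[unfolded U_one_free_def, rule_format, of "2 ^ k + a"]
      bracket(2) not_is_pow2_if_bracket[OF bracket] by simp
  ultimately show ?thesis
    by simp
qed

lemma U_one_free_card_ge_if_top_mem:
  assumes "U_one_free (Suc k) S" "finite S" "2 ^ k \<in> S"
  shows "2 ^ k \<le> card S"
proof -
  have cover: "a \<in> S \<or> 2 ^ k + a \<in> S" if "a \<in> {1..<2 ^ k}" for a
  proof (rule ccontr)
    assume "\<not> (a \<in> S \<or> 2 ^ k + a \<in> S)"
    then have "{2 ^ k + a, a, 2 ^ k} \<inter> S = {2 ^ k}"
      using assms(3) by auto
    then show False
      using U_one_free_top_row[OF assms(1), of a] that by simp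
  qed
  define g where "g a = (if a \<in> S then a else 2 ^ k + a)" for a :: nat
  have "inj_on g {1..<2 ^ k}"
    by (auto simp: inj_on_def g_def)
  moreover have "g ` {1..<2 ^ k} \<subseteq> S - {2 ^ k}"
  proof
    fix y assume "y \<in> g ` {1..<2 ^ k}"
    then obtain a where "a \<in> {1..<2 ^ k}" "y = g a" by blast
    with cover[of a] show "y \<in> S - {2 ^ k}" by (auto simp: g_def)
  qed
  ultimately have "card {1..<(2::nat) ^ k} \<le> card (S - {2 ^ k})"
    using assms(2) by (intro card_inj_on_le) auto
  moreover have "0 < card S"
    using assms(2,3) card_gt_0_iff by blast
  ultimately show ?thesis
    using assms(3) by simp
qed

lemma U_one_free_if_top_not_mem:
  assumes "U_one_free (Suc k) S" "S \<subseteq> {1..<2 ^ Suc k}" "2 ^ k \<notin> S"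
  defines "L \<equiv> S \<inter> {..<2 ^ k}"
  shows "U_one_free k L" and "S = L \<union> (+) (2 ^ k) ` L"
proof -
  show "U_one_free k L"
    unfolding U_one_free_def
  proof (intro allI impI)
    fix r :: nat assume r: "0 < r" "r < 2 ^ k" "\<not> is_pow2 r"
    have "{c \<in> L. U_entry r c} = {c \<in> S. U_entry r c}"
      using U_entry_le r(2) by (force simp: L_def)
    moreover have "r < 2 ^ Suc k"
      using r(2) by simp
    ultimately show "card {c \<in> L. U_entry r c} \<noteq> 1"
      using assms(1)[unfolded U_one_free_def, rule_format, of r] r by simp
  qed
  have mirror: "a \<in> S \<longleftrightarrow> 2 ^ k + a \<in> S" if "0 < a" "a < 2 ^ k" for a
  proof (rule ccontr)
    assume "\<not> (a \<in> S \<longleftrightarrow> 2 ^ k + a \<in> S)"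
    then have "card ({2 ^ k + a, a, 2 ^ k} \<inter> S) = 1"
      using assms(3) that by (cases "a \<in> S") auto
    then show False
      using U_one_free_top_row[OF assms(1) that] by simp
  qed
  show "S = L \<union> (+) (2 ^ k) ` L"
  proof (intro set_eqI iffI)
    fix x assume "x \<in> S"
    show "x \<in> L \<union> (+) (2 ^ k) ` L"
    proof (cases "x < 2 ^ k")
      case True
      then show ?thesis using \<open>x \<in> S\<close> by (simp add: L_def)
    next
      case False
      with \<open>x \<in> S\<close> assms(2,3) have "x \<noteq> 2 ^ k" "x < 2 * 2 ^ k"
        by auto
      with False have "0 < x - 2 ^ k" "x - 2 ^ k < 2 ^ k" "x = 2 ^ k + (x - 2 ^ k)"
        by auto
      with \<open>x \<in> S\<close> mirror[of "x - 2 ^ k"] have "x - 2 ^ k \<in> L"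
        by (simp add: L_def)
      with \<open>x = 2 ^ k + (x - 2 ^ k)\<close> show ?thesis
        by blast
    qed
  next
    fix x assume "x \<in> L \<union> (+) (2 ^ k) ` L"
    then consider "x \<in> L" | a where "a \<in> L" "x = 2 ^ k + a"
      by blast
    then show "x \<in> S"
    proof cases
      case 2
      with assms(2) have "0 < a" "a < 2 ^ k" "a \<in> S"
        by (auto simp: L_def)
      with 2 mirror show ?thesis by simp
    qed (simp add: L_def)
  qed
qed

lemma U_one_free_card_ge:
  assumes "U_one_free k S" "S \<subseteq> {1..<2 ^ k}" "S \<noteq> {}"
  shows "2 ^ (k - 1) \<le> card S"
  using assms
proof (induction k arbitrary: S)
  case 0
  then show ?case by simp
next
  case (Suc k)
  have "finite S"
    using Suc.prems(2) finite_subset by blast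
  show ?case
  proof (cases "2 ^ k \<in> S")
    case True
    then show ?thesis
      using U_one_free_card_ge_if_top_mem[OF Suc.prems(1) \<open>finite S\<close>] by simp
  next
    case False
    define L where "L = S \<inter> {..<2 ^ k}"
    have L: "U_one_free k L" "S = L \<union> (+) (2 ^ k) ` L"
      using U_one_free_if_top_not_mem[OF Suc.prems(1,2) False] by (simp_all add: L_def)
    have "L \<subseteq> {1..<2 ^ k}"
      using Suc.prems(2) by (auto simp: L_def)
    moreover have "L \<noteq> {}"
      using Suc.prems(3) L(2) by auto
    ultimately have "2 ^ (k - 1) \<le> card L" "0 < k"
      using Suc.IH L(1) by (blast, cases k, auto)
    moreover have "card S = card L + card L"
    proof -
      have "finite L" "L \<inter> (+) (2 ^ k) ` L = {}"
        using \<open>L \<subseteq> {1..<2 ^ k}\<close> finite_subset by (blast, auto)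
      then show ?thesis
        by (subst L(2)) (simp add: card_Un_disjoint card_image)
    qed
    ultimately show ?thesis
      by (cases k) auto
  qed
qed

lemma U_one_free_pow2_mem:
  assumes "U_one_free k S" "S \<subseteq> {1..<2 ^ k}" "S \<noteq> {}"
  shows "\<exists>t<k. 2 ^ t \<in> S"
  using assms
proof (induction k arbitrary: S)
  case 0
  then show ?case by simp
next
  case (Suc k)
  show ?case
  proof (cases "2 ^ k \<in> S")
    case False
    define L where "L = S \<inter> {..<2 ^ k}"
    have L: "U_one_free k L" "S = L \<union> (+) (2 ^ k) ` L"
      using U_one_free_if_top_not_mem[OF Suc.prems(1,2) False] by (simp_all add: L_def)
    have "L \<subseteq> {1..<2 ^ k}"
      using Suc.prems(2) by (auto simp: L_def)
    moreover have "L \<noteq> {}"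
      using Suc.prems(3) L(2) by auto
    ultimately obtain t where "t < k" "2 ^ t \<in> L"
      using Suc.IH L(1) by blast
    then show ?thesis
      by (auto simp: L_def intro: less_SucI)
  qed auto
qed

lemma one_free_iff_card:
  assumes "finite S"
  shows "one_free A mr S \<longleftrightarrow> (\<forall>i<mr. card {j \<in> S. A i j} \<noteq> 1)"
proof -
  have "S \<inter> {j. A i j} = {j \<in> S. A i j}" for i by auto
  then show ?thesis
    unfolding one_free_def using assms by simp
qed

lemma u_min_geI:
  assumes "S\<^sub>0 \<subseteq> {..<nc}" "S\<^sub>0 \<noteq> {}" "one_free A mr S\<^sub>0"
    and "\<And>S. S \<subseteq> {..<nc} \<Longrightarrow> S \<noteq> {} \<Longrightarrow> one_free A mr S \<Longrightarrow> c \<le> card S"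
  shows "c \<le> u_min A mr nc"
  unfolding u_min_def
proof (rule LeastI2_ex)
  show "\<exists>c. \<exists>S. S \<subseteq> {..<nc} \<and> S \<noteq> {} \<and> one_free A mr S \<and> card S = c"
    using assms(1-3) by blast
qed (use assms(4) in blast)

lemma set_nonpow: "set (nonpow k) = {r. 0 < r \<and> r < 2 ^ k \<and> \<not> is_pow2 r}"
  unfolding nonpow_def by auto

lemma pow2_image_lessThan: "(\<lambda>t. 2 ^ t) ` {..<k} = {r \<in> {1..<2 ^ k}. is_pow2 (r::nat)}"
proof (intro set_eqI iffI)
  fix r :: nat assume "r \<in> (\<lambda>t. 2 ^ t) ` {..<k}"
  then show "r \<in> {r \<in> {1..<2 ^ k}. is_pow2 r}"
    unfolding is_pow2_def by (auto simp: Suc_le_eq)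
next
  fix r :: nat assume "r \<in> {r \<in> {1..<2 ^ k}. is_pow2 r}"
  then obtain t where "r = 2 ^ t" "r < 2 ^ k"
    unfolding is_pow2_def by auto
  then have "t < k"
    using power_less_imp_less_exp[of 2 t k] by simp
  with \<open>r = 2 ^ t\<close> show "r \<in> (\<lambda>t. 2 ^ t) ` {..<k}"
    by blast
qed

lemma length_nonpow: "length (nonpow k) = 2 ^ k - 1 - k"
proof -
  have "length (nonpow k) = card (set (nonpow k))"
    by (metis distinct_card distinct_filter distinct_upt nonpow_def)
  also have "set (nonpow k) = {1..<2 ^ k} - (\<lambda>t. 2 ^ t) ` {..<k}"
    unfolding set_nonpow pow2_image_lessThan by (auto simp: Suc_le_eq)
  also have "card \<dots> = card {1..<(2::nat) ^ k} - card ((\<lambda>t. (2::nat) ^ t) ` {..<k})"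
    by (rule card_Diff_subset) auto
  also have "card ((\<lambda>t. (2::nat) ^ t) ` {..<k}) = k"
    by (subst card_image) (auto simp: inj_on_def)
  finally show ?thesis by simp
qed

lemma set_nonpow_Un_pow2: "set (nonpow k) \<union> (\<lambda>t. 2 ^ t) ` {..<k} = {1..<2 ^ k}"
  unfolding set_nonpow pow2_image_lessThan by (auto simp: Suc_le_eq)

locale Ukm_layout =
  fixes k m :: nat
  assumes k_ge_2: "2 \<le> k" and m_ge_1: "1 \<le> m"
begin

definition p :: nat where "p = 2 ^ k - 1 - k"
definition id_col0 :: nat where "id_col0 = m * p"
definition R_col0 :: nat where "R_col0 = m * p + (m - 1) * k"

lemma k_plus_2_le: "k + 2 \<le> 2 ^ k"
  using k_ge_2
proof (induction k rule: dec_induct)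
  case (step n)
  then show ?case by simp
qed simp

lemma p_pos: "0 < p"
  using k_plus_2_le unfolding p_def by simp

lemma length_nonpow_eq: "length (nonpow k) = p"
  unfolding p_def by (rule length_nonpow)

lemma ncols_eq: "(2 ^ k - 1) * m = R_col0 + k"
proof -
  have "2 ^ k - 1 = p + k"
    using k_plus_2_le unfolding p_def by simp
  then have "(2 ^ k - 1) * m = m * p + m * k"
    by (simp add: algebra_simps)
  moreover have "m * k = (m - 1) * k + k"
    using m_ge_1 by (cases m) auto
  ultimately show ?thesis
    unfolding R_col0_def by simp
qed

lemma nrows_eq: "(2 ^ k - 1) * m - k = R_col0"
  using ncols_eq by simp

lemma id_col0_le_R_col0: "id_col0 \<le> R_col0"
  unfolding id_col0_def R_col0_def by simp

lemma block_index_lt: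
  assumes "b < m" "i < p"
  shows "b * p + i < id_col0"
proof -
  have "b * p + i < Suc b * p"
    using assms(2) by simp
  also have "\<dots> \<le> m * p"
    using assms(1) by (intro mult_right_mono) auto
  finally show ?thesis
    unfolding id_col0_def .
qed

lemma id_index_lt:
  assumes "b < m - 1" "j < k"
  shows "b * k + j < (m - 1) * k"
proof -
  have "b * k + j < Suc b * k"
    using assms(2) by simp
  also have "\<dots> \<le> (m - 1) * k"
    using assms(1) by (intro mult_right_mono) auto
  finally show ?thesis .
qed

lemma Ukm_block_row:
  assumes "b < m" "i < p"
  shows "Ukm k m (b * p + i) j =
    (if j < id_col0 then j div p = b \<and> T_mat k i (j mod p)
     else if j < R_col0 then False else R_mat k i (j - R_col0))"
proof -
  have "(b * p + i) div p = b" "(b * p + i) mod p = i"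
    using assms p_pos by auto
  moreover have "2 ^ k - 1 - k = p"
    by (simp add: p_def)
  ultimately show ?thesis
    using block_index_lt[OF assms]
    unfolding Ukm_def Let_def id_col0_def R_col0_def by (simp add: diff_diff_left)
qed

lemma Ukm_id_row:
  "Ukm k m (id_col0 + i) j =
    (if j < id_col0 then False else if j < R_col0 then j = id_col0 + i
     else j = R_col0 + i mod k)"
proof -
  have "2 ^ k - 1 - k = p"
    by (simp add: p_def)
  then show ?thesis
    unfolding Ukm_def Let_def id_col0_def R_col0_def by (auto simp: diff_diff_left)
qed

definition pow_sel :: "nat set \<Rightarrow> nat set" where
  "pow_sel S = {j. j < k \<and> R_col0 + j \<in> S}"

definition block_labels :: "nat set \<Rightarrow> nat \<Rightarrow> nat set" where
  "block_labels S b =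
     (!) (nonpow k) ` {i. i < p \<and> b * p + i \<in> S} \<union> (\<lambda>j. 2 ^ (k - 1 - j)) ` pow_sel S"

lemma nonpow_nth:
  assumes "i < p"
  shows "0 < nonpow k ! i \<and> nonpow k ! i < 2 ^ k \<and> \<not> is_pow2 (nonpow k ! i)"
  using nth_mem[of i "nonpow k"] assms length_nonpow_eq unfolding set_nonpow by simp

lemma block_row_support:
  assumes S: "S \<subseteq> {..<R_col0 + k}" and b: "b < m" and i: "i < p"
  defines "X \<equiv> {i'. i' < p \<and> b * p + i' \<in> S \<and> U_entry (nonpow k ! i) (nonpow k ! i')}"
    and "Y \<equiv> {j \<in> pow_sel S. U_entry (nonpow k ! i) (2 ^ (k - 1 - j))}"
  shows "{j \<in> S. Ukm k m (b * p + i) j} = (\<lambda>i'. b * p + i') ` X \<union> (\<lambda>j. R_col0 + j) ` Y"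
proof (intro set_eqI iffI)
  fix j assume "j \<in> {j \<in> S. Ukm k m (b * p + i) j}"
  then have jS: "j \<in> S" and jA: "Ukm k m (b * p + i) j" by auto
  show "j \<in> (\<lambda>i'. b * p + i') ` X \<union> (\<lambda>j. R_col0 + j) ` Y"
  proof (cases "j < id_col0")
    case True
    then have "j div p = b" "T_mat k i (j mod p)"
      using jA Ukm_block_row[OF b i, of j] by auto
    moreover have "j mod p < p"
      using p_pos by simp
    ultimately have "j mod p \<in> X" "j = b * p + j mod p"
      using jS unfolding X_def T_mat_def by (auto intro: div_mult_mod_eq[symmetric])
    then show ?thesis by blast
  next
    case False
    then have "R_col0 \<le> j" "R_mat k i (j - R_col0)"
      using jA Ukm_block_row[OF b i, of j] by (auto split: if_splits)
    then have "j - R_col0 \<in> Y" "j = R_col0 + (j - R_col0)"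
      using jS S unfolding Y_def pow_sel_def R_mat_def by auto
    then show ?thesis by blast
  qed
next
  fix j assume "j \<in> (\<lambda>i'. b * p + i') ` X \<union> (\<lambda>j. R_col0 + j) ` Y"
  then consider i' where "i' \<in> X" "j = b * p + i'" | j' where "j' \<in> Y" "j = R_col0 + j'"
    by blast
  then show "j \<in> {j \<in> S. Ukm k m (b * p + i) j}"
  proof cases
    case 1
    then have "i' < p" "(b * p + i') div p = b" "(b * p + i') mod p = i'"
      using p_pos unfolding X_def by auto
    with 1 show ?thesis
      using block_index_lt[OF b] Ukm_block_row[OF b i, of j] unfolding X_def T_mat_def by auto
  next
    case 2
    then show ?thesis
      using id_col0_le_R_col0 Ukm_block_row[OF b i, of j] unfolding Y_def pow_sel_def R_mat_def
      by auto
  qed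
qed

lemma card_block_row:
  assumes S: "S \<subseteq> {..<R_col0 + k}" and b: "b < m" and i: "i < p"
  shows "card {j \<in> S. Ukm k m (b * p + i) j} =
    card {c \<in> block_labels S b. U_entry (nonpow k ! i) c}"
proof -
  define X where "X = {i'. i' < p \<and> b * p + i' \<in> S \<and> U_entry (nonpow k ! i) (nonpow k ! i')}"
  define Y where "Y = {j \<in> pow_sel S. U_entry (nonpow k ! i) (2 ^ (k - 1 - j))}"
  have fin: "finite X" "finite Y"
    unfolding X_def Y_def pow_sel_def by simp_all
  note row = block_row_support[OF S b i, folded X_def Y_def]
  have labels: "{c \<in> block_labels S b. U_entry (nonpow k ! i) c} =
      (!) (nonpow k) ` X \<union> (\<lambda>j. 2 ^ (k - 1 - j)) ` Y"
    unfolding block_labels_def X_def Y_def by auto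
  have "card ((\<lambda>i'. b * p + i') ` X \<union> (\<lambda>j. R_col0 + j) ` Y) = card X + card Y"
    using fin block_index_lt[OF b] id_col0_le_R_col0
    by (subst card_Un_disjoint) (fastforce simp: X_def card_image)+
  moreover have "card ((!) (nonpow k) ` X \<union> (\<lambda>j. (2::nat) ^ (k - 1 - j)) ` Y) = card X + card Y"
  proof -
    have "inj_on ((!) (nonpow k)) X"
      using length_nonpow_eq unfolding X_def
      by (auto simp: inj_on_def nonpow_def nth_eq_iff_index_eq)
    moreover have "inj_on (\<lambda>j. (2::nat) ^ (k - 1 - j)) Y"
      unfolding Y_def pow_sel_def by (auto simp: inj_on_def power_inject_exp)
    moreover have "(!) (nonpow k) ` X \<inter> (\<lambda>j. 2 ^ (k - 1 - j)) ` Y = {}"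
      using nonpow_nth unfolding X_def is_pow2_def by fastforce
    ultimately show ?thesis
      using fin by (simp add: card_Un_disjoint card_image)
  qed
  ultimately show ?thesis
    using row labels by simp
qed

lemma block_labels_subset: "block_labels S b \<subseteq> {1..<2 ^ k}"
proof
  fix c assume "c \<in> block_labels S b"
  then consider i where "i < p" "c = nonpow k ! i" | j where "c = 2 ^ (k - 1 - j)"
    unfolding block_labels_def by blast
  then show "c \<in> {1..<2 ^ k}"
  proof cases
    case 1
    then show ?thesis using nonpow_nth[of i] by simp
  next
    case 2
    have "(2::nat) ^ (k - 1 - j) < 2 ^ k"
      using k_ge_2 by (intro power_strict_increasing) auto
    with 2 show ?thesis by simp
  qed
qed

lemma block_labels_one_free:
  assumes S: "S \<subseteq> {..<R_col0 + k}" "one_free (Ukm k m) R_col0 S" and b: "b < m"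
  shows "U_one_free k (block_labels S b)"
  unfolding U_one_free_def
proof (intro allI impI)
  fix r :: nat assume "0 < r" "r < 2 ^ k" "\<not> is_pow2 r"
  then have "r \<in> set (nonpow k)"
    unfolding set_nonpow by simp
  then obtain i where i: "i < p" "r = nonpow k ! i"
    using length_nonpow_eq by (metis in_set_conv_nth)
  have "b * p + i < R_col0"
    using block_index_lt[OF b i(1)] id_col0_le_R_col0 by simp
  moreover have "finite S"
    using S(1) finite_subset by blast
  ultimately have "card {j \<in> S. Ukm k m (b * p + i) j} \<noteq> 1"
    using S(2) one_free_iff_card by blast
  then show "card {c \<in> block_labels S b. U_entry r c} \<noteq> 1"
    using card_block_row[OF S(1) b i(1)] i(2) by simp
qed

lemma id_col_mem_iff:
  assumes S: "S \<subseteq> {..<R_col0 + k}" "one_free (Ukm k m) R_col0 S"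
    and b: "b < m - 1" and j: "j < k"
  shows "id_col0 + (b * k + j) \<in> S \<longleftrightarrow> j \<in> pow_sel S"
proof -
  let ?c = "id_col0 + (b * k + j)"
  have lt: "?c < R_col0"
    using id_index_lt[OF b j] unfolding id_col0_def R_col0_def by simp
  have "{x \<in> S. Ukm k m ?c x} = {?c, R_col0 + j} \<inter> S"
    using Ukm_id_row[of "b * k + j"] j lt by auto
  moreover have "finite S"
    using S(1) finite_subset by blast
  ultimately have "card ({?c, R_col0 + j} \<inter> S) \<noteq> 1"
    using S(2) lt one_free_iff_card by metis
  moreover have "?c \<noteq> R_col0 + j"
    using lt by simp
  ultimately have "?c \<in> S \<longleftrightarrow> R_col0 + j \<in> S"
    by (cases "?c \<in> S"; cases "R_col0 + j \<in> S") auto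
  then show ?thesis
    unfolding pow_sel_def using j by simp
qed

lemma pow_sel_nonempty:
  assumes S: "S \<subseteq> {..<R_col0 + k}" "one_free (Ukm k m) R_col0 S" "S \<noteq> {}"
  shows "pow_sel S \<noteq> {}"
proof -
  obtain j where j: "j \<in> S" "j < R_col0 + k"
    using S(1,3) by blast
  consider "j < id_col0" | "id_col0 \<le> j" "j < R_col0" | "R_col0 \<le> j"
    by linarith
  then show ?thesis
  proof cases
    case 1
    define b where "b = j div p"
    have b: "b < m"
      using 1 p_pos unfolding b_def id_col0_def by (simp add: div_less_iff_less_mult)
    have "nonpow k ! (j mod p) \<in> block_labels S b"
      using j(1) p_pos unfolding block_labels_def b_def by (auto intro!: imageI)
    then obtain t where "2 ^ t \<in> block_labels S b"
      using U_one_free_pow2_mem[OF block_labels_one_free[OF S(1,2) b] block_labels_subset]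
      by blast
    moreover have "(2::nat) ^ t \<notin> (!) (nonpow k) ` {i. i < p \<and> b * p + i \<in> S}"
      using nonpow_nth is_pow2_def by (auto simp: eq_commute[of "2 ^ t"])
    ultimately have "(2::nat) ^ t \<in> (\<lambda>j. 2 ^ (k - 1 - j)) ` pow_sel S"
      unfolding block_labels_def by blast
    then show ?thesis by blast
  next
    case 2
    define i where "i = j - id_col0"
    have blk: "i div k < m - 1"
      using 2 k_ge_2 unfolding i_def id_col0_def R_col0_def by (simp add: div_less_iff_less_mult)
    have "id_col0 + (i div k * k + i mod k) \<in> S"
      using 2 j(1) unfolding i_def by simp
    moreover have "i mod k < k"
      using k_ge_2 by simp
    ultimately have "i mod k \<in> pow_sel S"
      using id_col_mem_iff[OF S(1,2) blk] by blast
    then show ?thesis by blast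
  next
    case 3
    then have "j - R_col0 \<in> pow_sel S"
      using j unfolding pow_sel_def by simp
    then show ?thesis by blast
  qed
qed

lemma block_labels_card_ge:
  assumes S: "S \<subseteq> {..<R_col0 + k}" "one_free (Ukm k m) R_col0 S" "S \<noteq> {}" and b: "b < m"
  shows "2 ^ (k - 1) \<le> card (block_labels S b)"
proof -
  have "block_labels S b \<noteq> {}"
    using pow_sel_nonempty[OF S] unfolding block_labels_def by blast
  then show ?thesis
    using U_one_free_card_ge[OF block_labels_one_free[OF S(1,2) b] block_labels_subset] by blast
qed

text \<open>The pair (block, label) accounted for by a column: the identity column
  id_col0 + b * k + j accounts for the R_k-label 2^(k-1-j) of block b + 1.\<close>

definition col_label :: "nat \<Rightarrow> nat \<times> nat" where
  "col_label j =
    (if j < id_col0 then (j div p, nonpow k ! (j mod p))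
     else if j < R_col0 then ((j - id_col0) div k + 1, 2 ^ (k - 1 - (j - id_col0) mod k))
     else (0, 2 ^ (k - 1 - (j - R_col0))))"

lemma Sigma_block_labels_subset:
  assumes S: "S \<subseteq> {..<R_col0 + k}" "one_free (Ukm k m) R_col0 S"
  shows "(SIGMA b:{..<m}. block_labels S b) \<subseteq> col_label ` S"
proof safe
  fix b c assume b: "b < m" and "c \<in> block_labels S b"
  then consider i where "i < p" "b * p + i \<in> S" "c = nonpow k ! i"
    | j where "j \<in> pow_sel S" "c = 2 ^ (k - 1 - j)"
    unfolding block_labels_def by blast
  then show "(b, c) \<in> col_label ` S"
  proof cases
    case 1
    then have "(b, c) = col_label (b * p + i)"
      unfolding col_label_def using block_index_lt[OF b \<open>i < p\<close>] by simp
    with 1(2) show ?thesis by (rule rev_image_eqI)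
  next
    case 2
    then have j: "j < k" "R_col0 + j \<in> S"
      unfolding pow_sel_def by auto
    show ?thesis
    proof (cases b)
      case 0
      then have "(b, c) = col_label (R_col0 + j)"
        unfolding col_label_def using id_col0_le_R_col0 2(2) by simp
      with j(2) show ?thesis by (rule rev_image_eqI)
    next
      case (Suc b')
      then have b': "b' < m - 1"
        using b by simp
      have "id_col0 + (b' * k + j) \<in> S"
        using id_col_mem_iff[OF S b' j(1)] 2(1) by simp
      moreover have "id_col0 + (b' * k + j) < R_col0"
        using id_index_lt[OF b' j(1)] unfolding id_col0_def R_col0_def by simp
      ultimately have "(b, c) = col_label (id_col0 + (b' * k + j))"
        unfolding col_label_def using Suc j(1) 2(2) by simp
      with \<open>id_col0 + (b' * k + j) \<in> S\<close> show ?thesis by (rule rev_image_eqI)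
    qed
  qed
qed

lemma one_free_card_ge:
  assumes S: "S \<subseteq> {..<R_col0 + k}" "one_free (Ukm k m) R_col0 S" "S \<noteq> {}"
  shows "2 ^ (k - 1) * m \<le> card S"
proof -
  have "finite S"
    using S(1) finite_subset by blast
  have "2 ^ (k - 1) * m = (\<Sum>b<m. 2 ^ (k - 1))"
    by simp
  also have "\<dots> \<le> (\<Sum>b<m. card (block_labels S b))"
    using block_labels_card_ge[OF S] by (intro sum_mono) simp
  also have "\<dots> = card (SIGMA b:{..<m}. block_labels S b)"
    using block_labels_subset finite_subset by (subst card_SigmaI) blast+
  also have "\<dots> \<le> card (col_label ` S)"
    using Sigma_block_labels_subset[OF S(1,2)] \<open>finite S\<close> by (intro card_mono) auto
  also have "\<dots> \<le> card S"
    using \<open>finite S\<close> by (rule card_image_le)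
  finally show ?thesis .
qed

lemma block_labels_all_columns:
  assumes "b < m"
  shows "block_labels {..<R_col0 + k} b = {1..<2 ^ k}"
proof -
  have "{i. i < p \<and> b * p + i \<in> {..<R_col0 + k}} = {..<p}"
    using block_index_lt[OF assms] id_col0_le_R_col0 by fastforce
  moreover have "(!) (nonpow k) ` {..<p} = set (nonpow k)"
    using length_nonpow_eq by (auto simp: set_conv_nth)
  moreover have "(\<lambda>j. 2 ^ (k - 1 - j)) ` pow_sel {..<R_col0 + k} = (\<lambda>t. (2::nat) ^ t) ` {..<k}"
  proof -
    have "pow_sel {..<R_col0 + k} = {..<k}"
      unfolding pow_sel_def by auto
    moreover have "(\<lambda>j. k - 1 - j) ` {..<k} = {..<k}"
      by (rule endo_inj_surj) (auto simp: inj_on_def)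
    ultimately show ?thesis
      by (metis image_image)
  qed
  moreover have "set (nonpow k) \<union> (\<lambda>t. 2 ^ t) ` {..<k} = {1..<2 ^ k}"
    by (rule set_nonpow_Un_pow2)
  ultimately show ?thesis
    unfolding block_labels_def by simp
qed

lemma one_free_all_columns: "one_free (Ukm k m) R_col0 {..<R_col0 + k}"
proof -
  have "card {j \<in> {..<R_col0 + k}. Ukm k m i j} \<noteq> 1" if i: "i < R_col0" for i
  proof (cases "i < id_col0")
    case True
    define b where "b = i div p"
    have b: "b < m"
      using True p_pos unfolding b_def id_col0_def by (simp add: div_less_iff_less_mult)
    have "i mod p < p"
      using p_pos by simp
    have "card {j \<in> {..<R_col0 + k}. Ukm k m i j} =
        card {c \<in> {1..<2 ^ k}. U_entry (nonpow k ! (i mod p)) c}"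
      using card_block_row[OF order.refl b \<open>i mod p < p\<close>] block_labels_all_columns[OF b]
      by (simp add: b_def)
    also have "\<dots> = 3"
      using card_U_row nonpow_nth[OF \<open>i mod p < p\<close>] by blast
    finally show ?thesis by simp
  next
    case False
    then have "{j \<in> {..<R_col0 + k}. Ukm k m i j} = {i, R_col0 + (i - id_col0) mod k}"
      using Ukm_id_row[of "i - id_col0"] i k_ge_2 by auto
    then show ?thesis
      using i by simp
  qed
  then show ?thesis
    using one_free_iff_card by blast
qed

end

theorem mainTheorem7:
  fixes k m :: nat
  assumes "k \<ge> 2" and "m \<ge> 1"
  shows "u_min (Ukm k m) ((2 ^ k - 1) * m - k) ((2 ^ k - 1) * m) \<ge> 2 ^ (k - 1) * m"
proof -
  interpret Ukm_layout k m
    using assms by unfold_locales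
  have "2 ^ (k - 1) * m \<le> u_min (Ukm k m) R_col0 (R_col0 + k)"
  proof (rule u_min_geI)
    have "0 \<in> {..<R_col0 + k}"
      using k_ge_2 by simp
    then show "{..<R_col0 + k} \<noteq> {}"
      by blast
  qed (use one_free_all_columns one_free_card_ge in auto)
  then show ?thesis
    unfolding nrows_eq by (subst ncols_eq)
qed

end
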